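(* Let $p\in(0,1)$ and $1\le m\le n$. Let $\tilde T^p_m$ be the tilted tree on $[m]$ and let $\mathcal Q^p$ be a Binomial pointset of intensity $p$ independent of $\tilde T^p_m$. Then the graph $G^X(\tilde T^p_m,\mathcal Q^p)$ has the same distribution as $G^p_m$.
   Context: Ordered depth-first search ${\bf oDFS}(T)$ for a tree $T$ on $[m]$: set $\mathcal O_0=(1)$ (ordered list), $\mathcal A_0=\emptyset$; for $i=0,\dots,m-1$ let $v_i$ be the first element of $\mathcal O_i$, $\mathcal N_i$ the neighbours of $v_i$ outside $\mathcal A_i\cup\mathcal O_i$, $\mathcal A_{i+1}=\mathcal A_i\cup\{v_i\}$, and $\mathcal O_{i+1}$ obtained by deleting $v_i$ from the front of $\mathcal O_i$ and placing $\mathcal N_i$ in increasing order at the front. Depth-first walk $X(i)=|\mathcal O_i|-1$ ($0\le i<m$), $X(i)=0$ for $i\ge m$; area $a(T)=\sum_{i=1}^{m-1}X(i)$. The tilted tree $\tilde T^p_m$ is a random tree on $[m]$ with $\mathbb P(\tilde T^p_m=T)\propto(1-p)^{-a(T)}$. A Binomial pointset of intensity $p$ is a random subset of $\mathbb Z_{\ge0}\times\mathbb Z_{\ge0}$ containing each point independently with probability $p$. For $S\subset\mathbb R^+\times\mathbb R^+$ and $f:\mathbb R^+\to\mathbb R^+$, $S\cap f:=\{(x,y)\in S:0<y\le f(x)\}$. For a tree $T$ on $[m]$ with depth-first walk $X$ and $\mathcal Q\subset\mathbb Z_{\ge0}^2$, $G^X(T,\mathcal Q)$ is the graph obtained from $T$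 by adding, for each $(i,j)\in\mathcal Q\cap X$, an edge between $v_i$ and the $j$-th vertex of $\mathcal O_i$ counted from the end of the list (i.e. the vertex in position $|\mathcal O_i|-j+1$). $G(n,p)$ is the Erdős–Rényi random graph on $[n]$; $G^p_m$ is the connected component of $G(n,p)$ containing a given vertex, conditioned to have exactly $m$ vertices, relabelled by $[m]$ via the increasing bijection. *)

theory Defs
  imports "HOL-Probability.Probability"
begin

definition pairs :: "nat \<Rightarrow> nat set set" where
  "pairs k = {{a, b} | a b. a \<in> {1..k} \<and> b \<in> {1..k} \<and> a \<noteq> b}"

definition adj_rel :: "nat set set \<Rightarrow> (nat \<times> nat) set" where
  "adj_rel E = {(a, b). {a, b} \<in> E \<and> a \<noteq> b}"

definition comp :: "nat set set \<Rightarrow> nat \<Rightarrow> nat set" where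
  "comp E v = {u. (v, u) \<in> (adj_rel E)\<^sup>*}"

definition is_tree :: "nat \<Rightarrow> nat set set \<Rightarrow> bool" where
  "is_tree m T \<longleftrightarrow> T \<subseteq> pairs m \<and> comp T 1 = {1..m} \<and> card T = m - 1"

definition trees :: "nat \<Rightarrow> nat set set set" where
  "trees m = {T. is_tree m T}"

definition odfs_step :: "nat set set \<Rightarrow> nat list \<times> nat set \<Rightarrow> nat list \<times> nat set" where
  "odfs_step T st = (let Ol = fst st; A = snd st; v = hd Ol;
      N = sorted_list_of_set ({u. {v, u} \<in> T \<and> u \<noteq> v} - A - set Ol)
    in (N @ tl Ol, insert v A))"

definition odfs :: "nat set set \<Rightarrow> nat \<Rightarrow> nat list \<times> nat set" where
  "odfs T i = (odfs_step T ^^ i) ([1], {})"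

definition dfsO :: "nat set set \<Rightarrow> nat \<Rightarrow> nat list" where
  "dfsO T i = fst (odfs T i)"

definition dfs_v :: "nat set set \<Rightarrow> nat \<Rightarrow> nat" where
  "dfs_v T i = hd (dfsO T i)"

definition dfs_walk :: "nat \<Rightarrow> nat set set \<Rightarrow> nat \<Rightarrow> nat" where
  "dfs_walk m T i = (if i < m then length (dfsO T i) - 1 else 0)"

definition area :: "nat \<Rightarrow> nat set set \<Rightarrow> nat" where
  "area m T = (\<Sum>i = 1..m - 1. dfs_walk m T i)"

text \<open>G^X(T,Q): add an edge between v_i and the j-th vertex of O_i counted from the
  end (position |O_i| - j + 1, i.e. 0-based index |O_i| - j) for each (i,j) in Q cap X.\<close>
definition GX :: "nat \<Rightarrow> nat set set \<Rightarrow> (nat \<times> nat) set \<Rightarrow> nat set set" where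
  "GX m T Q = T \<union> {{dfs_v T i, dfsO T i ! (length (dfsO T i) - j)} | i j.
       (i, j) \<in> Q \<and> 0 < j \<and> j \<le> dfs_walk m T i}"

definition tilt_weight :: "real \<Rightarrow> nat \<Rightarrow> nat set set \<Rightarrow> real" where
  "tilt_weight p m T = (1 - p) powi (- int (area m T))"

definition tilt_prob :: "real \<Rightarrow> nat \<Rightarrow> nat set set \<Rightarrow> real" where
  "tilt_prob p m T = tilt_weight p m T / (\<Sum>T'\<in>trees m. tilt_weight p m T')"

section \<open>Binomial pointset on Z>=0 x Z>=0 (a point is present iff its coordinate is True)\<close>

definition binom_pointset :: "real \<Rightarrow> (nat \<times> nat \<Rightarrow> bool) measure" where
  "binom_pointset p = PiM UNIV (\<lambda>_. measure_pmf (bernoulli_pmf p))"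

definition gnp :: "nat \<Rightarrow> real \<Rightarrow> nat set set pmf" where
  "gnp n p = map_pmf (\<lambda>\<omega>. {e \<in> pairs n. \<omega> e}) (Pi_pmf (pairs n) False (\<lambda>_. bernoulli_pmf p))"

definition rank :: "nat set \<Rightarrow> nat \<Rightarrow> nat" where
  "rank C x = card {y \<in> C. y \<le> x}"

definition comp_relabel :: "nat set set \<Rightarrow> nat \<Rightarrow> nat set set" where
  "comp_relabel E v = (\<lambda>e. rank (comp E v) ` e) ` {e \<in> E. e \<subseteq> comp E v}"

definition Gpm :: "nat \<Rightarrow> real \<Rightarrow> nat \<Rightarrow> nat \<Rightarrow> nat set set pmf" where
  "Gpm n p m v = map_pmf (\<lambda>E. comp_relabel E v)
      (cond_pmf (gnp n p) {E. card (comp E v) = m})"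

end

theory Submission
  imports Defs
begin

text \<open>
  Ordered depth-first search of a connected graph \<open>H\<close> on \<open>[m]\<close> yields a spanning tree \<open>T\<close>, and
  every other edge of \<open>H\<close> joins the current vertex \<open>v\<^sub>i\<close> to a vertex still in the queue
  \<open>\<O>\<^sub>i\<close>, i.e. it is the edge that \<open>G\<^sup>X\<close> adds for a lattice point under the walk of \<open>T\<close>.
  Conversely such edges are invisible to the search, so \<open>(T, Q) \<mapsto> G\<^sup>X(T, Q)\<close> is a bijection
  from trees with a set \<open>Q\<close> of points under their walk onto connected graphs, and
  \<open>|G\<^sup>X(T, Q)| = m - 1 + |Q|\<close>. There are \<open>a(T)\<close> points under the walk, so the tilt
  \<open>(1 - p) powi -a(T)\<close> cancels against the probability \<open>p ^ |Q| * (1 - p) ^ (a(T) - |Q|)\<close> of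
  \<open>Q\<close>: the graph \<open>G\<^sup>X\<close> of the tilted tree equals \<open>H\<close> with probability proportional to
  \<open>(p / (1 - p)) ^ |H|\<close>.

  In \<open>G(n, p)\<close>, a graph whose \<open>v\<close>-component has \<open>m\<close> vertices and relabels to \<open>H\<close> amounts to
  a vertex set for the component plus arbitrary edges avoiding it; its weight is
  \<open>(p / (1 - p)) ^ |H|\<close> times the weight of the outside edges, so \<open>G\<^sup>p\<^sub>m\<close> has the same law.
\<close>

definition nbrs :: "nat set set \<Rightarrow> nat \<Rightarrow> nat set" where
  "nbrs E x = {u. {x, u} \<in> E \<and> u \<noteq> x}"

lemma pairs_memD:
  assumes "{a, b} \<in> pairs k" shows "a \<in> {1..k} \<and> b \<in> {1..k} \<and> a \<noteq> b"
proof -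
  obtain c d where "{a, b} = {c, d}" "c \<in> {1..k}" "d \<in> {1..k}" "c \<noteq> d"
    using assms unfolding pairs_def by blast
  then show ?thesis by (auto simp: doubleton_eq_iff)
qed

lemma pairs_memI: "a \<in> {1..k} \<Longrightarrow> b \<in> {1..k} \<Longrightarrow> a \<noteq> b \<Longrightarrow> {a, b} \<in> pairs k"
  unfolding pairs_def by auto

lemma pairsE:
  assumes "e \<in> pairs k"
  obtains a b where "e = {a, b}" "a \<in> {1..k}" "b \<in> {1..k}" "a \<noteq> b"
  using assms unfolding pairs_def by auto

lemma pairs_subset: "e \<in> pairs k \<Longrightarrow> e \<subseteq> {1..k}"
  unfolding pairs_def by auto

lemma pairs_nonempty: "e \<in> pairs k \<Longrightarrow> e \<noteq> {}"
  unfolding pairs_def by auto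

lemma finite_pairs: "finite (pairs k)"
proof -
  have "pairs k \<subseteq> Pow {1..k}" using pairs_subset by blast
  then show ?thesis by (rule finite_subset) simp
qed

lemma adj_rel_iff [simp]: "(a, b) \<in> adj_rel E \<longleftrightarrow> {a, b} \<in> E \<and> a \<noteq> b"
  unfolding adj_rel_def by simp

lemma nbrs_subset: "E \<subseteq> pairs k \<Longrightarrow> nbrs E x \<subseteq> {1..k}"
  unfolding nbrs_def by (auto dest!: subsetD pairs_memD)

lemma comp_self: "a \<in> comp E a"
  unfolding comp_def by simp

lemma comp_closed: "x \<in> comp E a \<Longrightarrow> {x, y} \<in> E \<Longrightarrow> x \<noteq> y \<Longrightarrow> y \<in> comp E a"
  unfolding comp_def by (auto intro: rtrancl_into_rtrancl)

lemma comp_mono: "E \<subseteq> F \<Longrightarrow> comp E a \<subseteq> comp F a"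
proof -
  assume "E \<subseteq> F"
  then have "adj_rel E \<subseteq> adj_rel F" unfolding adj_rel_def by auto
  then show ?thesis unfolding comp_def using rtrancl_mono by blast
qed

lemma comp_subset:
  assumes E: "E \<subseteq> pairs k" and a: "a \<in> {1..k}"
  shows "comp E a \<subseteq> {1..k}"
proof
  fix u assume "u \<in> comp E a"
  then have "(a, u) \<in> (adj_rel E)\<^sup>*" by (simp add: comp_def)
  then show "u \<in> {1..k}"
  proof induction
    case (step y z)
    then have "{y, z} \<in> pairs k" using E by auto
    then show ?case using pairs_memD by blast
  qed (rule a)
qed

lemma reach_sym: "(a, b) \<in> (adj_rel E)\<^sup>* \<Longrightarrow> (b, a) \<in> (adj_rel E)\<^sup>*"
proof -
  have "sym (adj_rel E)" unfolding sym_def by (auto simp: insert_commute)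
  then show "(a, b) \<in> (adj_rel E)\<^sup>* \<Longrightarrow> (b, a) \<in> (adj_rel E)\<^sup>*"
    using sym_rtrancl unfolding sym_def by blast
qed

lemma edge_subset_comp:
  assumes "E \<subseteq> pairs k" "e \<in> E" "x \<in> e" "x \<in> comp E a"
  shows "e \<subseteq> comp E a"
proof -
  obtain b c where "e = {b, c}" "b \<noteq> c" using assms(1,2) by (blast elim: pairsE)
  then show ?thesis
    using assms(2-4) comp_closed[of x E a] by (auto simp: insert_commute)
qed

abbreviation dfs_explored :: "nat set set \<Rightarrow> nat \<Rightarrow> nat set" where
  "dfs_explored E i \<equiv> snd (odfs E i)"

definition dfs_new :: "nat set set \<Rightarrow> nat \<Rightarrow> nat set" where
  "dfs_new E i = nbrs E (dfs_v E i) - dfs_explored E i - set (dfsO E i)"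

lemma dfsO_0 [simp]: "dfsO E 0 = [1]" and dfs_explored_0 [simp]: "dfs_explored E 0 = {}"
  by (simp_all add: dfsO_def odfs_def)

lemma odfs_Suc: "odfs E (Suc i) =
   (sorted_list_of_set (dfs_new E i) @ tl (dfsO E i), insert (dfs_v E i) (dfs_explored E i))"
  by (simp add: odfs_def odfs_step_def Let_def dfs_new_def nbrs_def dfs_v_def dfsO_def)

lemma dfsO_Suc: "dfsO E (Suc i) = sorted_list_of_set (dfs_new E i) @ tl (dfsO E i)"
  and dfs_explored_Suc: "dfs_explored E (Suc i) = insert (dfs_v E i) (dfs_explored E i)"
  by (simp_all add: dfsO_def odfs_Suc)

lemma finite_dfs_new: assumes "E \<subseteq> pairs k" shows "finite (dfs_new E i)"
  unfolding dfs_new_def using finite_subset[OF nbrs_subset[OF assms]] by simp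

lemma set_dfsO_Suc:
  "E \<subseteq> pairs k \<Longrightarrow> set (dfsO E (Suc i)) = dfs_new E i \<union> set (tl (dfsO E i))"
  using finite_dfs_new by (simp add: dfsO_Suc)

lemma set_dfsO_hd: "dfsO E i \<noteq> [] \<Longrightarrow> set (dfsO E i) = insert (dfs_v E i) (set (tl (dfsO E i)))"
  by (cases "dfsO E i") (simp_all add: dfs_v_def)

lemma visited_Suc:
  assumes "E \<subseteq> pairs k" "dfsO E i \<noteq> []"
  shows "dfs_explored E (Suc i) \<union> set (dfsO E (Suc i))
       = dfs_new E i \<union> (dfs_explored E i \<union> set (dfsO E i))"
  using set_dfsO_Suc[OF assms(1)] set_dfsO_hd[OF assms(2)] dfs_explored_Suc by auto

definition dfs_invariant :: "nat set set \<Rightarrow> nat \<Rightarrow> bool" where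
  "dfs_invariant E i \<longleftrightarrow> distinct (dfsO E i) \<and> set (dfsO E i) \<inter> dfs_explored E i = {}
     \<and> dfs_explored E i = dfs_v E ` {..<i}
     \<and> dfs_explored E i \<union> set (dfsO E i) \<subseteq> comp E 1
     \<and> (\<forall>a\<in>dfs_explored E i. nbrs E a \<subseteq> dfs_explored E i \<union> set (dfsO E i))
     \<and> 1 \<in> dfs_explored E i \<union> set (dfsO E i)
     \<and> card (dfs_explored E i \<union> set (dfsO E i)) = 1 + (\<Sum>k<i. card (dfs_new E k))
     \<and> card (dfs_explored E i) = i"

lemma dfs_invariant_0: "dfs_invariant E 0"
  by (simp add: dfs_invariant_def comp_self)

lemma dfs_queue_Suc:
  assumes E: "E \<subseteq> pairs k" and ne: "dfsO E i \<noteq> []"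
    and dist: "distinct (dfsO E i)" and disj: "set (dfsO E i) \<inter> dfs_explored E i = {}"
  shows "distinct (dfsO E (Suc i))" and "set (dfsO E (Suc i)) \<inter> dfs_explored E (Suc i) = {}"
proof -
  let ?O = "dfsO E i" and ?A = "dfs_explored E i" and ?v = "dfs_v E i" and ?N = "dfs_new E i"
  have setO: "set ?O = insert ?v (set (tl ?O))" by (rule set_dfsO_hd[OF ne])
  have vtl: "?v \<notin> set (tl ?O)" using dist ne by (cases ?O) (simp_all add: dfs_v_def)
  have NA: "?N \<inter> (?A \<union> set ?O) = {}" unfolding dfs_new_def by blast
  show "distinct (dfsO E (Suc i))"
    using dist finite_dfs_new[OF E] NA setO unfolding dfsO_Suc by (simp add: distinct_tl) blast
  show "set (dfsO E (Suc i)) \<inter> dfs_explored E (Suc i) = {}"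
    using disj NA vtl setO unfolding set_dfsO_Suc[OF E] dfs_explored_Suc by blast
qed

lemma dfs_invariant_Suc:
  assumes E: "E \<subseteq> pairs k" and I: "dfs_invariant E i" and ne: "dfsO E i \<noteq> []"
  shows "dfs_invariant E (Suc i)"
proof -
  let ?O = "dfsO E i" and ?A = "dfs_explored E i" and ?v = "dfs_v E i" and ?N = "dfs_new E i"
  have I1: "distinct ?O" and I2: "set ?O \<inter> ?A = {}" and I3: "?A = dfs_v E ` {..<i}"
    and I4: "?A \<union> set ?O \<subseteq> comp E 1" and I5: "\<forall>a\<in>?A. nbrs E a \<subseteq> ?A \<union> set ?O"
    and I6: "1 \<in> ?A \<union> set ?O" and I7: "card (?A \<union> set ?O) = 1 + (\<Sum>k<i. card (dfs_new E k))"
    and I8: "card ?A = i"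
    using I unfolding dfs_invariant_def by blast+
  have v: "?v \<in> set ?O" using set_dfsO_hd[OF ne] by blast
  have fA: "finite ?A" using I3 by simp
  have NA: "?N \<inter> (?A \<union> set ?O) = {}" unfolding dfs_new_def by blast
  have Ncomp: "?N \<subseteq> comp E 1"
    using comp_closed[of ?v E 1] I4 v unfolding dfs_new_def nbrs_def by blast
  note un = visited_Suc[OF E ne]
  show ?thesis unfolding dfs_invariant_def
  proof (intro conjI)
    show "distinct (dfsO E (Suc i))" "set (dfsO E (Suc i)) \<inter> dfs_explored E (Suc i) = {}"
      using dfs_queue_Suc[OF E ne I1 I2] by blast+
    show "dfs_explored E (Suc i) = dfs_v E ` {..<Suc i}"
      using I3 unfolding dfs_explored_Suc by (auto simp: lessThan_Suc)
    show "dfs_explored E (Suc i) \<union> set (dfsO E (Suc i)) \<subseteq> comp E 1"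
      unfolding un using I4 Ncomp by blast
    show "\<forall>a\<in>dfs_explored E (Suc i). nbrs E a \<subseteq> dfs_explored E (Suc i) \<union> set (dfsO E (Suc i))"
    proof
      fix a assume "a \<in> dfs_explored E (Suc i)"
      then consider "a = ?v" | "a \<in> ?A" unfolding dfs_explored_Suc by blast
      then show "nbrs E a \<subseteq> dfs_explored E (Suc i) \<union> set (dfsO E (Suc i))"
        unfolding un using I5 by cases (auto simp: dfs_new_def)
    qed
    show "1 \<in> dfs_explored E (Suc i) \<union> set (dfsO E (Suc i))"
      unfolding un using I6 by blast
    show "card (dfs_explored E (Suc i) \<union> set (dfsO E (Suc i))) = 1 + (\<Sum>k<Suc i. card (dfs_new E k))"
      unfolding un using I7 NA finite_dfs_new[OF E] fA by (simp add: card_Un_disjoint)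
    show "card (dfs_explored E (Suc i)) = Suc i"
      using I8 I2 v fA unfolding dfs_explored_Suc by (simp add: disjoint_iff)
  qed
qed

lemma dfs_invariant_upto:
  assumes "E \<subseteq> pairs k" and "\<And>j. j < i \<Longrightarrow> dfsO E j \<noteq> []"
  shows "dfs_invariant E i"
  using assms(2) by (induction i) (auto intro: dfs_invariant_0 dfs_invariant_Suc[OF assms(1)])

text \<open>An empty queue means the explored set is closed under neighbours; it is then the whole
  component of \<open>1\<close>, which has more than \<open>i\<close> elements.\<close>
lemma dfsO_nonempty:
  assumes C: "comp E 1 = {1..m}" and I: "dfs_invariant E i" and i: "i < m"
  shows "dfsO E i \<noteq> []"
proof
  assume O: "dfsO E i = []"
  have "\<forall>a\<in>dfs_explored E i. nbrs E a \<subseteq> dfs_explored E i \<union> set (dfsO E i)"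
    and "1 \<in> dfs_explored E i \<union> set (dfsO E i)" and card: "card (dfs_explored E i) = i"
    using I unfolding dfs_invariant_def by blast+
  then have closed: "\<forall>a\<in>dfs_explored E i. nbrs E a \<subseteq> dfs_explored E i"
    and one: "1 \<in> dfs_explored E i"
    using O by simp_all
  have fin: "finite (dfs_explored E i)" using I unfolding dfs_invariant_def by simp
  have "comp E 1 \<subseteq> dfs_explored E i"
  proof
    fix u assume "u \<in> comp E 1"
    then have "(1, u) \<in> (adj_rel E)\<^sup>*" by (simp add: comp_def)
    then show "u \<in> dfs_explored E i"
    proof induction
      case (step y z)
      then have "z \<in> nbrs E y" by (simp add: nbrs_def)
      then show ?case using closed step.IH by blast
    qed (rule one)
  qed
  then have "card {1..m} \<le> card (dfs_explored E i)" using C by (intro card_mono[OF fin]) simp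
  then show False using i card by simp
qed

lemma dfs_agree:
  assumes TH: "T \<subseteq> H"
    and new: "\<And>i. i < m \<Longrightarrow> odfs T i = odfs H i \<Longrightarrow> dfs_new H i \<subseteq> nbrs T (dfs_v H i)"
  shows "i \<le> m \<Longrightarrow> odfs T i = odfs H i"
    and "i < m \<Longrightarrow> dfs_new T i = dfs_new H i"
proof -
  have sub: "nbrs T x \<subseteq> nbrs H x" for x using TH unfolding nbrs_def by blast
  have step: "dfs_new T i = dfs_new H i" if "i < m" "odfs T i = odfs H i" for i
  proof -
    have eqs: "dfs_v T i = dfs_v H i" "dfsO T i = dfsO H i" "dfs_explored T i = dfs_explored H i"
      using that(2) by (simp_all add: dfs_v_def dfsO_def)
    show ?thesis
      using new[OF that, unfolded dfs_new_def] sub[of "dfs_v H i"] unfolding dfs_new_def eqs by blast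
  qed
  show run: "odfs T i = odfs H i" if "i \<le> m" for i
    using that
  proof (induction i)
    case (Suc i)
    then have "odfs T i = odfs H i" by simp
    then show ?case
      using step[of i] Suc.prems by (simp add: odfs_Suc dfs_v_def dfsO_def)
  qed (simp add: odfs_def)
  show "i < m \<Longrightarrow> dfs_new T i = dfs_new H i"
    using step run by simp
qed

definition dfs_tree :: "nat \<Rightarrow> nat set set \<Rightarrow> nat set set" where
  "dfs_tree m E = {{dfs_v E i, u} | i u. i < m \<and> u \<in> dfs_new E i}"

lemma dfs_tree_memI: "i < m \<Longrightarrow> u \<in> dfs_new E i \<Longrightarrow> {dfs_v E i, u} \<in> dfs_tree m E"
  unfolding dfs_tree_def by blast

locale connected_graph =
  fixes E :: "nat set set" and m :: nat
  assumes edges: "E \<subseteq> pairs m" and connected: "comp E 1 = {1..m}"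
begin

lemma one_le: "1 \<le> m"
  using connected comp_self[of 1 E] by auto

lemma finite_edges: "finite E"
  using finite_subset[OF edges finite_pairs] .

lemma invariant: "i \<le> m \<Longrightarrow> dfs_invariant E i"
proof (induction i)
  case (Suc i)
  then show ?case
    using dfs_invariant_Suc[OF edges] dfsO_nonempty[OF connected] by simp
qed (rule dfs_invariant_0)

lemma queue_nonempty: "i < m \<Longrightarrow> dfsO E i \<noteq> []"
  using dfsO_nonempty[OF connected invariant] by simp

lemma
  assumes "i \<le> m"
  shows queue_distinct: "distinct (dfsO E i)"
    and queue_unexplored: "set (dfsO E i) \<inter> dfs_explored E i = {}"
    and explored_eq: "dfs_explored E i = dfs_v E ` {..<i}"
    and visited_subset: "dfs_explored E i \<union> set (dfsO E i) \<subseteq> {1..m}"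
    and card_explored: "card (dfs_explored E i) = i"
  using invariant[OF assms] unfolding dfs_invariant_def connected by blast+

lemma dfs_v_nth: "i < m \<Longrightarrow> dfs_v E i = dfsO E i ! 0"
  using queue_nonempty by (simp add: dfs_v_def hd_conv_nth)

lemma explored_all: "dfs_explored E m = {1..m}"
proof -
  have "dfs_explored E m \<subseteq> {1..m}" using visited_subset[of m] by simp
  moreover have "card (dfs_explored E m) = m" by (rule card_explored) simp
  ultimately show ?thesis by (intro card_subset_eq) simp_all
qed

lemma dfs_v_image: "dfs_v E ` {..<m} = {1..m}"
  using explored_all explored_eq[of m] by simp

lemma inj_dfs_v: "inj_on (dfs_v E) {..<m}"
  using dfs_v_image by (simp add: inj_on_iff_eq_card)

lemma dfs_v_eq_iff: "i < m \<Longrightarrow> k < m \<Longrightarrow> dfs_v E i = dfs_v E k \<longleftrightarrow> i = k"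
  using inj_dfs_v unfolding inj_on_def by blast

lemma queue_final: "dfsO E m = []"
proof -
  have "set (dfsO E m) \<subseteq> {1..m}" using visited_subset[of m] by simp
  moreover have "set (dfsO E m) \<inter> {1..m} = {}" using queue_unexplored[of m] explored_all by simp
  ultimately have "set (dfsO E m) = {}" by (metis Int_absorb2)
  then show ?thesis by simp
qed

lemma sum_card_dfs_new: "(\<Sum>k<m. card (dfs_new E k)) = m - 1"
proof -
  have "card (dfs_explored E m \<union> set (dfsO E m)) = 1 + (\<Sum>k<m. card (dfs_new E k))"
    using invariant[of m] unfolding dfs_invariant_def by blast
  then show ?thesis using explored_all queue_final by simp
qed

lemma unexplored_later:
  assumes "i < m" "w \<in> {1..m}" "w \<notin> dfs_explored E i" "w \<noteq> dfs_v E i"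
  shows "\<exists>k. i < k \<and> k < m \<and> w = dfs_v E k"
proof -
  obtain k where k: "k < m" "w = dfs_v E k" using assms(2) dfs_v_image by force
  have "\<not> k < i" using assms(1,3) k explored_eq[of i] by auto
  moreover have "k \<noteq> i" using assms(4) k by auto
  ultimately have "i < k" by simp
  then show ?thesis using k by blast
qed

lemma dfs_new_later:
  assumes i: "i < m" and u: "u \<in> dfs_new E i"
  shows "\<exists>k. i < k \<and> k < m \<and> u = dfs_v E k"
proof (rule unexplored_later[OF i])
  show "u \<in> {1..m}" using u nbrs_subset[OF edges] unfolding dfs_new_def by blast
  show "u \<notin> dfs_explored E i" "u \<noteq> dfs_v E i"
    using u queue_nonempty[OF i] unfolding dfs_new_def dfs_v_def by auto
qed

lemma queue_later:
  assumes i: "i < m" and idx: "0 < idx" "idx < length (dfsO E i)"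
  shows "\<exists>k. i < k \<and> k < m \<and> dfsO E i ! idx = dfs_v E k"
proof (rule unexplored_later[OF i])
  have w: "dfsO E i ! idx \<in> set (dfsO E i)" using idx by simp
  then show "dfsO E i ! idx \<in> {1..m}" "dfsO E i ! idx \<notin> dfs_explored E i"
    using visited_subset[of i] queue_unexplored[of i] i by auto
  show "dfsO E i ! idx \<noteq> dfs_v E i"
    using nth_eq_iff_index_eq[OF queue_distinct[of i] idx(2), of 0] idx i dfs_v_nth queue_nonempty[OF i]
    by simp
qed

lemma dfs_tree_subset: "dfs_tree m E \<subseteq> E"
  unfolding dfs_tree_def dfs_new_def nbrs_def by auto

lemma card_dfs_tree: "card (dfs_tree m E) = m - 1"
proof -
  let ?f = "\<lambda>(i, u). {dfs_v E i, u}" and ?S = "SIGMA i:{..<m}. dfs_new E i"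
  have "inj_on ?f ?S"
  proof (rule inj_onI, clarify)
    fix i u k w
    assume i: "i < m" "u \<in> dfs_new E i" and k: "k < m" "w \<in> dfs_new E k"
      and eq: "{dfs_v E i, u} = {dfs_v E k, w}"
    obtain a where a: "i < a" "a < m" "u = dfs_v E a" using dfs_new_later[OF i] by blast
    obtain b where b: "k < b" "b < m" "w = dfs_v E b" using dfs_new_later[OF k] by blast
    show "i = k \<and> u = w"
      using eq a b i k dfs_v_eq_iff by (auto simp: doubleton_eq_iff)
  qed
  moreover have "dfs_tree m E = ?f ` ?S" unfolding dfs_tree_def by auto
  ultimately have "card (dfs_tree m E) = card ?S" by (simp add: card_image)
  also have "\<dots> = (\<Sum>i<m. card (dfs_new E i))"
    using finite_dfs_new[OF edges] by (simp add: card_SigmaI)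
  finally show ?thesis using sum_card_dfs_new by simp
qed

lemma dfs_tree_eq: "card E = m - 1 \<Longrightarrow> dfs_tree m E = E"
  using card_subset_eq[OF finite_edges dfs_tree_subset] card_dfs_tree by simp

end

definition connected_graphs :: "nat \<Rightarrow> nat set set set" where
  "connected_graphs m = {H. connected_graph H m}"

locale tree_graph = connected_graph +
  assumes card_edges: "card E = m - 1"

lemma trees_eq: "trees m = {T. tree_graph T m}"
  unfolding trees_def is_tree_def tree_graph_def tree_graph_axioms_def connected_graph_def
  by (simp add: conj_assoc)

lemma tree_graphI: "T \<in> trees m \<Longrightarrow> tree_graph T m"
  by (simp add: trees_eq)

lemma trees_connected: "T \<in> trees m \<Longrightarrow> connected_graph T m"
  using tree_graph.axioms(1)[OF tree_graphI] .

lemma connected_graphI: "H \<in> connected_graphs m \<Longrightarrow> connected_graph H m"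
  by (simp add: connected_graphs_def)

lemma finite_trees: "finite (trees m)"
proof -
  have "trees m \<subseteq> Pow (pairs m)" unfolding trees_def is_tree_def by auto
  then show ?thesis by (rule finite_subset) (simp add: finite_pairs)
qed

lemma finite_connected_graphs: "finite (connected_graphs m)"
proof -
  have "connected_graphs m \<subseteq> Pow (pairs m)"
    unfolding connected_graphs_def connected_graph_def by auto
  then show ?thesis by (rule finite_subset) (simp add: finite_pairs)
qed

definition walk_points :: "nat \<Rightarrow> nat set set \<Rightarrow> (nat \<times> nat) set" where
  "walk_points m T = {(i, j). i < m \<and> 0 < j \<and> j \<le> dfs_walk m T i}"

definition walk_edge :: "nat set set \<Rightarrow> nat \<times> nat \<Rightarrow> nat set" where
  "walk_edge T = (\<lambda>(i, j). {dfs_v T i, dfsO T i ! (length (dfsO T i) - j)})"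

lemma GX_eq: "GX m T Q = T \<union> walk_edge T ` (Q \<inter> walk_points m T)"
proof -
  have "i < m" if "0 < j" "j \<le> dfs_walk m T i" for i j
    using that by (simp add: dfs_walk_def split: if_splits)
  then have "{{dfs_v T i, dfsO T i ! (length (dfsO T i) - j)} | i j.
       (i, j) \<in> Q \<and> 0 < j \<and> j \<le> dfs_walk m T i} = walk_edge T ` (Q \<inter> walk_points m T)"
    unfolding walk_points_def walk_edge_def by (auto simp: image_iff)
  then show ?thesis unfolding GX_def by simp
qed

lemma walk_points_eq_Sigma: "walk_points m T = (SIGMA i:{..<m}. {1..dfs_walk m T i})"
  unfolding walk_points_def by auto

lemma finite_walk_points: "finite (walk_points m T)"
  unfolding walk_points_eq_Sigma by auto

lemma card_walk_points:
  assumes "1 \<le> m" shows "card (walk_points m T) = area m T"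
proof -
  have "card (walk_points m T) = (\<Sum>i<m. dfs_walk m T i)"
    unfolding walk_points_eq_Sigma by (simp add: card_SigmaI)
  also have "\<dots> = dfs_walk m T 0 + (\<Sum>i = 1..m - 1. dfs_walk m T i)"
  proof -
    have "{..<m} = insert 0 {1..m - 1}" using assms by auto
    then show ?thesis by simp
  qed
  also have "dfs_walk m T 0 = 0" using assms by (simp add: dfs_walk_def)
  finally show ?thesis by (simp add: area_def)
qed

lemma dfs_tree_cong:
  "(\<And>i. i < m \<Longrightarrow> dfs_v E i = dfs_v F i \<and> dfs_new E i = dfs_new F i) \<Longrightarrow>
   dfs_tree m E = dfs_tree m F"
  unfolding dfs_tree_def by (metis (no_types, opaque_lifting))

context connected_graph
begin

lemma walk_pointsD: "(i, j) \<in> walk_points m E \<Longrightarrow> i < m \<and> 0 < j \<and> j < length (dfsO E i)"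
  using queue_nonempty unfolding walk_points_def dfs_walk_def by fastforce

lemma walk_edgeE:
  assumes s: "(i, j) \<in> walk_points m E"
  obtains k where "i < k" "k < m" "dfsO E i ! (length (dfsO E i) - j) = dfs_v E k"
    "walk_edge E (i, j) = {dfs_v E i, dfs_v E k}"
proof -
  from walk_pointsD[OF s] have "i < m" "0 < j" "j < length (dfsO E i)" by auto
  then have "\<exists>k. i < k \<and> k < m \<and> dfsO E i ! (length (dfsO E i) - j) = dfs_v E k"
    using queue_later[of i "length (dfsO E i) - j"] by auto
  then obtain k where "i < k" "k < m" "dfsO E i ! (length (dfsO E i) - j) = dfs_v E k"
    by blast
  then show ?thesis using that by (simp add: walk_edge_def)
qed

lemma inj_on_walk_edge: "inj_on (walk_edge E) (walk_points m E)"
proof (rule inj_onI, clarify)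
  fix i j i' j'
  assume s: "(i, j) \<in> walk_points m E" and t: "(i', j') \<in> walk_points m E"
    and eq: "walk_edge E (i, j) = walk_edge E (i', j')"
  obtain k where k: "i < k" "k < m" "dfsO E i ! (length (dfsO E i) - j) = dfs_v E k"
      "walk_edge E (i, j) = {dfs_v E i, dfs_v E k}"
    using walk_edgeE[OF s] .
  obtain k' where k': "i' < k'" "k' < m" "dfsO E i' ! (length (dfsO E i') - j') = dfs_v E k'"
      "walk_edge E (i', j') = {dfs_v E i', dfs_v E k'}"
    using walk_edgeE[OF t] .
  note D = walk_pointsD[OF s] walk_pointsD[OF t]
  have ii: "i' = i" and kk: "k' = k"
    using eq k k' D dfs_v_eq_iff[of i i'] dfs_v_eq_iff[of i k'] dfs_v_eq_iff[of k i']
      dfs_v_eq_iff[of k k'] by (auto simp: doubleton_eq_iff)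
  have "length (dfsO E i) - j < length (dfsO E i)" "length (dfsO E i) - j' < length (dfsO E i)"
    using D unfolding ii by auto
  then have "dfsO E i ! (length (dfsO E i) - j) = dfsO E i ! (length (dfsO E i) - j') \<longleftrightarrow>
      length (dfsO E i) - j = length (dfsO E i) - j'"
    using D by (intro nth_eq_iff_index_eq queue_distinct) auto
  then have "length (dfsO E i) - j = length (dfsO E i) - j'"
    using k(3) k'(3) unfolding ii kk by simp
  then show "i = i' \<and> j = j'" using D ii by auto
qed

lemma walk_edge_notin_dfs_tree:
  assumes s: "(i, j) \<in> walk_points m E" shows "walk_edge E (i, j) \<notin> dfs_tree m E"
proof
  obtain k where k: "i < k" "k < m" "dfsO E i ! (length (dfsO E i) - j) = dfs_v E k"
      "walk_edge E (i, j) = {dfs_v E i, dfs_v E k}"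
    using walk_edgeE[OF s] .
  have D: "i < m" "0 < j" "j < length (dfsO E i)" using walk_pointsD[OF s] by auto
  assume "walk_edge E (i, j) \<in> dfs_tree m E"
  then obtain a u where a: "a < m" and u: "u \<in> dfs_new E a"
      and eq: "{dfs_v E i, dfs_v E k} = {dfs_v E a, u}"
    unfolding dfs_tree_def k(4) by blast
  obtain b where b: "a < b" "b < m" "u = dfs_v E b" using dfs_new_later[OF a u] by blast
  have "i = a \<and> k = b"
    using eq k(1,2) a b D(1) dfs_v_eq_iff[of i a] dfs_v_eq_iff[of i b] dfs_v_eq_iff[of k a]
      dfs_v_eq_iff[of k b] by (auto simp: doubleton_eq_iff)
  moreover have "dfs_v E k \<in> set (dfsO E i)"
    using k(3)[symmetric] D by auto
  ultimately show False using u b(3) unfolding dfs_new_def by blast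
qed

lemma walk_edge_in_pairs: "s \<in> walk_points m E \<Longrightarrow> walk_edge E s \<in> pairs m"
proof (cases s)
  case (Pair i j)
  assume s: "s \<in> walk_points m E"
  obtain k where k: "i < k" "k < m" "walk_edge E s = {dfs_v E i, dfs_v E k}"
    using walk_edgeE s Pair by metis
  then show ?thesis
    using dfs_v_image dfs_v_eq_iff[of i k] by (auto intro!: pairs_memI)
qed

lemma walk_graph_connected:
  assumes "Q \<subseteq> walk_points m E" shows "E \<union> walk_edge E ` Q \<in> connected_graphs m"
proof -
  have sub: "E \<union> walk_edge E ` Q \<subseteq> pairs m" using edges walk_edge_in_pairs assms by blast
  moreover have "comp (E \<union> walk_edge E ` Q) 1 = {1..m}"
    using comp_subset[OF sub] comp_mono[of E "E \<union> walk_edge E ` Q" 1] connected one_le by auto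
  ultimately show ?thesis unfolding connected_graphs_def connected_graph_def by simp
qed

lemma walk_edge_visited:
  assumes s: "(a, j) \<in> walk_points m E" and i: "i < m"
    and e: "walk_edge E (a, j) = {dfs_v E i, u}"
  shows "u \<in> dfs_explored E i \<union> set (dfsO E i)"
proof -
  obtain k where k: "a < k" "k < m" "dfsO E a ! (length (dfsO E a) - j) = dfs_v E k"
      "walk_edge E (a, j) = {dfs_v E a, dfs_v E k}"
    using walk_edgeE[OF s] .
  have D: "a < m" "0 < j" "j < length (dfsO E a)" using walk_pointsD[OF s] by auto
  have "{dfs_v E i, u} = {dfs_v E a, dfs_v E k}" using e k(4) by simp
  then consider "i = a" "u = dfs_v E k" | "i = k" "u = dfs_v E a"
    using dfs_v_eq_iff[OF i D(1)] dfs_v_eq_iff[OF i k(2)] i by (auto simp: doubleton_eq_iff)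
  then show ?thesis
  proof cases
    case 1
    then show ?thesis using k(3)[symmetric] D by auto
  next
    case 2
    then show ?thesis using k(1) D(1) explored_eq[of i] i by auto
  qed
qed

text \<open>Walk edges only join \<open>v\<^sub>i\<close> to vertices that are explored or queued at step \<open>i\<close>, so the
  search does not notice them.\<close>
lemma dfs_walk_graph:
  assumes Q: "Q \<subseteq> walk_points m E"
  shows "i \<le> m \<Longrightarrow> odfs E i = odfs (E \<union> walk_edge E ` Q) i"
    and "i < m \<Longrightarrow> dfs_new E i = dfs_new (E \<union> walk_edge E ` Q) i"
proof -
  let ?H = "E \<union> walk_edge E ` Q"
  have "dfs_new ?H i \<subseteq> nbrs E (dfs_v ?H i)" if i: "i < m" and eq: "odfs E i = odfs ?H i" for i
  proof
    have eqs: "dfs_v ?H i = dfs_v E i" "dfsO ?H i = dfsO E i" "dfs_explored ?H i = dfs_explored E i"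
      using eq by (simp_all add: dfs_v_def dfsO_def)
    fix u assume "u \<in> dfs_new ?H i"
    then have e: "{dfs_v E i, u} \<in> ?H" and u: "u \<noteq> dfs_v E i" "u \<notin> dfs_explored E i"
      "u \<notin> set (dfsO E i)"
      unfolding dfs_new_def nbrs_def eqs by auto
    have "{dfs_v E i, u} \<in> E"
    proof (rule ccontr)
      assume "{dfs_v E i, u} \<notin> E"
      then obtain a j where "(a, j) \<in> Q" and "walk_edge E (a, j) = {dfs_v E i, u}"
        using e by auto
      then show False using walk_edge_visited[OF _ i] Q u by blast
    qed
    then show "u \<in> nbrs E (dfs_v ?H i)" using u unfolding nbrs_def eqs by simp
  qed
  then show "i \<le> m \<Longrightarrow> odfs E i = odfs ?H i" and "i < m \<Longrightarrow> dfs_new E i = dfs_new ?H i"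
    using dfs_agree[of E ?H m i] by auto
qed

lemma dfs_tree_walk_graph:
  assumes "Q \<subseteq> walk_points m E" shows "dfs_tree m (E \<union> walk_edge E ` Q) = dfs_tree m E"
  using dfs_walk_graph[OF assms] by (intro dfs_tree_cong) (simp add: dfs_v_def dfsO_def)

lemma dfs_tree_run: "i \<le> m \<Longrightarrow> odfs (dfs_tree m E) i = odfs E i"
proof (rule dfs_agree(1)[OF dfs_tree_subset])
  fix i assume "i < m"
  then show "dfs_new E i \<subseteq> nbrs (dfs_tree m E) (dfs_v E i)"
    using dfs_tree_memI[of i m] by (auto simp: dfs_new_def nbrs_def)
qed

lemma dfs_tree_in_trees: "dfs_tree m E \<in> trees m"
proof -
  let ?D = "dfs_tree m E"
  have DE: "?D \<subseteq> pairs m" using dfs_tree_subset edges by blast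
  have "dfs_invariant ?D m"
    using dfs_invariant_upto[OF DE] dfs_tree_run queue_nonempty by (simp add: dfsO_def)
  then have "dfs_explored ?D m \<subseteq> comp ?D 1" unfolding dfs_invariant_def by blast
  then have "{1..m} \<subseteq> comp ?D 1" using dfs_tree_run[of m] explored_all by simp
  then have "comp ?D 1 = {1..m}" using comp_subset[OF DE, of 1] one_le by auto
  then show ?thesis using DE card_dfs_tree unfolding trees_def is_tree_def by simp
qed

lemma walk_points_dfs_tree: "walk_points m (dfs_tree m E) = walk_points m E"
proof -
  have "dfs_walk m (dfs_tree m E) i = dfs_walk m E i" for i
    using dfs_tree_run[of i] by (cases "i < m") (simp_all add: dfs_walk_def dfsO_def)
  then show ?thesis by (simp add: walk_points_def)
qed

lemma walk_edge_dfs_tree: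
  assumes "(i, j) \<in> walk_points m E" shows "walk_edge (dfs_tree m E) (i, j) = walk_edge E (i, j)"
proof -
  have "odfs (dfs_tree m E) i = odfs E i" using assms dfs_tree_run by (simp add: walk_points_def)
  then show ?thesis by (simp add: walk_edge_def dfs_v_def dfsO_def)
qed

text \<open>An edge of \<open>E\<close> from \<open>v\<^sub>i\<close> to a later vertex \<open>w\<close> is a tree edge if \<open>w\<close> is discovered at
  step \<open>i\<close>, and otherwise \<open>w\<close> is already queued, so the edge is a walk edge.\<close>
lemma edge_in_walk_graph:
  assumes ik: "i < k" "k < m" and e: "{dfs_v E i, dfs_v E k} \<in> E"
  shows "{dfs_v E i, dfs_v E k} \<in> dfs_tree m E \<union> walk_edge E ` walk_points m E"
proof (cases "dfs_v E k \<in> set (dfsO E i)")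
  case False
  have "dfs_v E k \<notin> dfs_v E ` {..<i}"
  proof
    assume "dfs_v E k \<in> dfs_v E ` {..<i}"
    then obtain x where "x < i" "dfs_v E k = dfs_v E x" by auto
    then show False using dfs_v_eq_iff[of k x] ik by simp
  qed
  then have "dfs_v E k \<notin> dfs_explored E i" "dfs_v E k \<noteq> dfs_v E i"
    using ik explored_eq[of i] dfs_v_eq_iff[of k i] by auto
  then have "dfs_v E k \<in> dfs_new E i"
    using False e unfolding dfs_new_def nbrs_def by simp
  then show ?thesis using ik dfs_tree_memI by simp
next
  case True
  then obtain idx where idx: "idx < length (dfsO E i)" "dfsO E i ! idx = dfs_v E k"
    by (auto simp: in_set_conv_nth)
  have "idx \<noteq> 0"
  proof
    assume "idx = 0"
    then have "dfs_v E i = dfs_v E k" using idx(2) dfs_v_nth[of i] ik by simp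
    then show False using dfs_v_eq_iff[of i k] ik by simp
  qed
  define j where "j = length (dfsO E i) - idx"
  have j: "0 < j" "j \<le> length (dfsO E i) - 1" "length (dfsO E i) - j = idx"
    using idx \<open>idx \<noteq> 0\<close> unfolding j_def by auto
  then have "(i, j) \<in> walk_points m E" using ik by (simp add: walk_points_def dfs_walk_def)
  moreover have "walk_edge E (i, j) = {dfs_v E i, dfs_v E k}"
    using j idx by (simp add: walk_edge_def)
  ultimately show ?thesis by (auto intro: rev_image_eqI)
qed

lemma dfs_tree_decomposition:
  "E = dfs_tree m E \<union> walk_edge (dfs_tree m E) `
         {s \<in> walk_points m (dfs_tree m E). walk_edge (dfs_tree m E) s \<in> E}"
  (is "E = ?D \<union> walk_edge ?D ` ?Q")
proof
  show "?D \<union> walk_edge ?D ` ?Q \<subseteq> E" using dfs_tree_subset by blast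
  show "E \<subseteq> ?D \<union> walk_edge ?D ` ?Q"
  proof
    fix e assume eE: "e \<in> E"
    obtain i k where ik: "i < k" "k < m" "e = {dfs_v E i, dfs_v E k}"
    proof -
      obtain a b where ab: "e = {a, b}" "a \<in> {1..m}" "b \<in> {1..m}" "a \<noteq> b"
        using eE edges by (blast elim: pairsE)
      then obtain i k where "i < m" "k < m" "a = dfs_v E i" "b = dfs_v E k"
        using dfs_v_image by (metis imageE lessThan_iff)
      then show ?thesis
        using that ab by (metis insert_commute linorder_neqE_nat)
    qed
    then have "e \<in> ?D \<union> walk_edge E ` walk_points m E"
      using edge_in_walk_graph eE by simp
    then show "e \<in> ?D \<union> walk_edge ?D ` ?Q"
      using eE walk_edge_dfs_tree walk_points_dfs_tree by force
  qed
qed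

end

context tree_graph
begin

lemma dfs_tree_self: "dfs_tree m E = E"
  by (rule dfs_tree_eq[OF card_edges])

lemma walk_edges_disjoint: "E \<inter> walk_edge E ` walk_points m E = {}"
  using walk_edge_notin_dfs_tree dfs_tree_self by auto

lemma walk_graph_cancel:
  assumes "A \<subseteq> walk_points m E" "B \<subseteq> walk_points m E"
    and "E \<union> walk_edge E ` A = E \<union> walk_edge E ` B"
  shows "A = B"
proof -
  have "walk_edge E ` A = walk_edge E ` B"
    using assms walk_edges_disjoint by blast
  then show ?thesis using inj_on_image_eq_iff[OF inj_on_walk_edge assms(1,2)] by simp
qed

lemma card_walk_graph:
  assumes Q: "Q \<subseteq> walk_points m E" shows "card (E \<union> walk_edge E ` Q) = m - 1 + card Q"
proof -
  have "finite Q" using finite_subset[OF Q finite_walk_points] .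
  then have "card (E \<union> walk_edge E ` Q) = card E + card (walk_edge E ` Q)"
    using walk_edges_disjoint Q finite_edges by (intro card_Un_disjoint) auto
  also have "card (walk_edge E ` Q) = card Q"
    using card_image[OF inj_on_subset[OF inj_on_walk_edge Q]] .
  finally show ?thesis using card_edges by simp
qed

lemma dfs_tree_walk_graph_self:
  "Q \<subseteq> walk_points m E \<Longrightarrow> dfs_tree m (E \<union> walk_edge E ` Q) = E"
  using dfs_tree_walk_graph dfs_tree_self by simp

end

text \<open>The tree is recovered from \<open>G\<^sup>X\<close> as its depth-first tree.\<close>
lemma bij_betw_walk_graph:
  "bij_betw (\<lambda>(T, Q). T \<union> walk_edge T ` Q) (SIGMA T:trees m. Pow (walk_points m T))
     (connected_graphs m)"
proof (rule bij_betw_imageI)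
  show "inj_on (\<lambda>(T, Q). T \<union> walk_edge T ` Q) (SIGMA T:trees m. Pow (walk_points m T))"
  proof (rule inj_onI, clarify)
    fix T Q T' Q'
    assume T: "T \<in> trees m" and Q: "Q \<subseteq> walk_points m T"
      and T': "T' \<in> trees m" and Q': "Q' \<subseteq> walk_points m T'"
      and eq: "T \<union> walk_edge T ` Q = T' \<union> walk_edge T' ` Q'"
    interpret t: tree_graph T m using tree_graphI[OF T] .
    interpret t': tree_graph T' m using tree_graphI[OF T'] .
    have "T = T'"
      using t.dfs_tree_walk_graph_self[OF Q] t'.dfs_tree_walk_graph_self[OF Q'] eq by simp
    then show "T = T' \<and> Q = Q'" using t.walk_graph_cancel[OF Q] Q' eq by simp
  qed
  show "(\<lambda>(T, Q). T \<union> walk_edge T ` Q) ` (SIGMA T:trees m. Pow (walk_points m T)) =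
      connected_graphs m"
  proof (intro equalityI subsetI)
    fix H assume "H \<in> (\<lambda>(T, Q). T \<union> walk_edge T ` Q) ` (SIGMA T:trees m. Pow (walk_points m T))"
    then obtain T Q where "T \<in> trees m" "Q \<subseteq> walk_points m T" "H = T \<union> walk_edge T ` Q"
      by auto
    then show "H \<in> connected_graphs m"
      using trees_connected connected_graph.walk_graph_connected by blast
  next
    fix H assume "H \<in> connected_graphs m"
    then interpret connected_graph H m by (rule connected_graphI)
    show "H \<in> (\<lambda>(T, Q). T \<union> walk_edge T ` Q) ` (SIGMA T:trees m. Pow (walk_points m T))"
      using dfs_tree_decomposition dfs_tree_in_trees
      by (intro rev_image_eqI[of "(dfs_tree m H, _)"]) auto
  qed
qed

lemma measure_binom_pointset_cylinder:
  assumes S: "finite S" and p: "0 \<le> p" "p \<le> 1"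
  shows "measure (binom_pointset p) {\<omega>. \<forall>s\<in>S. \<omega> s = b s} = (\<Prod>s\<in>S. pmf (bernoulli_pmf p) (b s))"
proof -
  interpret P: product_prob_space "\<lambda>_::nat \<times> nat. measure_pmf (bernoulli_pmf p)" UNIV
    by (intro product_prob_spaceI measure_pmf.prob_space_axioms)
  have eq: "{\<omega>. \<forall>s\<in>S. \<omega> s = b s} =
      prod_emb UNIV (\<lambda>_. measure_pmf (bernoulli_pmf p)) S (Pi\<^sub>E S (\<lambda>s. {b s}))"
    by (auto simp: prod_emb_iff restrict_PiE_iff extensional_def)
  have "measure (binom_pointset p) {\<omega>. \<forall>s\<in>S. \<omega> s = b s} =
      (\<Prod>s\<in>S. measure (measure_pmf (bernoulli_pmf p)) {b s})"
    unfolding eq binom_pointset_def by (rule P.measure_PiM_emb) (simp_all add: S)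
  then show ?thesis by (simp add: measure_pmf_single)
qed

lemma prod_bernoulli_indicator:
  assumes S: "finite S" and Q: "Q \<subseteq> S" and p: "0 \<le> p" "p \<le> 1"
  shows "(\<Prod>s\<in>S. pmf (bernoulli_pmf p) (s \<in> Q)) = p ^ card Q * (1 - p) ^ (card S - card Q)"
proof -
  have "(\<Prod>s\<in>S. pmf (bernoulli_pmf p) (s \<in> Q)) =
        (\<Prod>s\<in>S - Q. pmf (bernoulli_pmf p) (s \<in> Q)) * (\<Prod>s\<in>Q. pmf (bernoulli_pmf p) (s \<in> Q))"
    by (rule prod.subset_diff[OF Q S])
  also have "\<dots> = (1 - p) ^ card (S - Q) * p ^ card Q"
    using p by (simp add: prod.cong[of "S - Q" _ _ "\<lambda>_. 1 - p"] prod.cong[of Q _ _ "\<lambda>_. p"])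
  finally show ?thesis using card_Diff_subset[OF finite_subset[OF Q S] Q] by simp
qed

lemma sum_Pow_power:
  fixes r :: real assumes "finite S" shows "(\<Sum>Q\<in>Pow S. r ^ card Q) = (r + 1) ^ card S"
  using prod_add[OF assms, of "\<lambda>_. r" "\<lambda>_. 1"] by simp

lemma measure_pmf_eq_sum:
  assumes "finite X" "set_pmf M \<subseteq> X"
  shows "measure (measure_pmf M) A = (\<Sum>x\<in>A \<inter> X. pmf M x)"
proof -
  have "measure (measure_pmf M) A = measure (measure_pmf M) (A \<inter> set_pmf M)"
    by (rule measure_Int_set_pmf[symmetric])
  also have "A \<inter> set_pmf M = (A \<inter> X) \<inter> set_pmf M" using assms(2) by blast
  also have "measure (measure_pmf M) \<dots> = measure (measure_pmf M) (A \<inter> X)"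
    by (rule measure_Int_set_pmf)
  also have "\<dots> = (\<Sum>x\<in>A \<inter> X. pmf M x)" using assms(1) by (simp add: measure_measure_pmf_finite)
  finally show ?thesis .
qed

lemma measure_cond_pmf:
  assumes fin: "finite (set_pmf M)" and ne: "set_pmf M \<inter> S \<noteq> {}"
  shows "measure (measure_pmf (cond_pmf M S)) A
       = measure (measure_pmf M) (A \<inter> S) / measure (measure_pmf M) S"
proof -
  have "measure (measure_pmf (cond_pmf M S)) A = (\<Sum>x\<in>A \<inter> set_pmf M. pmf (cond_pmf M S) x)"
    using fin by (intro measure_pmf_eq_sum) (auto simp: set_cond_pmf[OF ne])
  also have "\<dots> = (\<Sum>x\<in>A \<inter> set_pmf M. if x \<in> S then pmf M x / measure (measure_pmf M) S else 0)"
    by (simp add: pmf_cond[OF ne])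
  also have "\<dots> = (\<Sum>x\<in>{x \<in> A \<inter> set_pmf M. x \<in> S}. pmf M x / measure (measure_pmf M) S)"
    using fin by (intro sum.inter_filter[symmetric]) simp
  also have "{x \<in> A \<inter> set_pmf M. x \<in> S} = (A \<inter> S) \<inter> set_pmf M" by blast
  also have "(\<Sum>x\<in>(A \<inter> S) \<inter> set_pmf M. pmf M x / measure (measure_pmf M) S)
      = measure (measure_pmf M) (A \<inter> S) / measure (measure_pmf M) S"
    using fin by (simp add: sum_divide_distrib[symmetric] measure_pmf_eq_sum)
  finally show ?thesis .
qed

context tree_graph
begin

lemma GX_event:
  assumes Q: "Q \<subseteq> walk_points m E"
  shows "{\<omega>. GX m E {x. \<omega> x} = E \<union> walk_edge E ` Q} = {\<omega>. \<forall>s\<in>walk_points m E. \<omega> s = (s \<in> Q)}"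
proof -
  have "GX m E {x. \<omega> x} = E \<union> walk_edge E ` Q \<longleftrightarrow> {x. \<omega> x} \<inter> walk_points m E = Q" for \<omega>
    using walk_graph_cancel[OF _ Q, of "{x. \<omega> x} \<inter> walk_points m E"] unfolding GX_eq by auto
  then show ?thesis using Q by blast
qed

lemma measure_GX_event:
  assumes Q: "Q \<subseteq> walk_points m E" and p: "0 \<le> p" "p \<le> 1"
  shows "measure (binom_pointset p) {\<omega>. GX m E {x. \<omega> x} = E \<union> walk_edge E ` Q}
       = p ^ card Q * (1 - p) ^ (area m E - card Q)"
  unfolding GX_event[OF Q] measure_binom_pointset_cylinder[OF finite_walk_points p]
    prod_bernoulli_indicator[OF finite_walk_points Q p] card_walk_points[OF one_le] ..

end

lemma tilt_weight_eq:
  assumes "p < 1" "1 \<le> m"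
  shows "tilt_weight p m T = (p / (1 - p) + 1) ^ card (walk_points m T)"
proof -
  have "p / (1 - p) + 1 = inverse (1 - p)" using assms by (simp add: field_simps)
  then show ?thesis
    using assms by (simp add: tilt_weight_def card_walk_points power_int_minus power_inverse)
qed

lemma tilt_weight_mult:
  assumes "p < 1" "k \<le> area m T"
  shows "tilt_weight p m T * (p ^ k * (1 - p) ^ (area m T - k)) = (p / (1 - p)) ^ k"
proof -
  have "(1 - p) ^ area m T = (1 - p) ^ (area m T - k) * (1 - p) ^ k"
    using assms(2) by (simp add: power_add[symmetric])
  then show ?thesis
    using assms(1) by (simp add: tilt_weight_def power_int_minus field_simps power_divide)
qed

lemma sum_connected_graphs_weight:
  assumes "p < 1"
  shows "(\<Sum>H\<in>connected_graphs m. (p / (1 - p)) ^ card H)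
       = (p / (1 - p)) ^ (m - 1) * (\<Sum>T\<in>trees m. tilt_weight p m T)"
proof -
  let ?r = "p / (1 - p)"
  have "(\<Sum>H\<in>connected_graphs m. ?r ^ card H)
      = (\<Sum>(T, Q)\<in>(SIGMA T:trees m. Pow (walk_points m T)). ?r ^ card (T \<union> walk_edge T ` Q))"
    using sum.reindex_bij_betw[OF bij_betw_walk_graph, of "\<lambda>H. ?r ^ card H" m]
    by (simp add: case_prod_beta)
  also have "\<dots> = (\<Sum>T\<in>trees m. \<Sum>Q\<in>Pow (walk_points m T). ?r ^ (m - 1) * ?r ^ card Q)"
    unfolding sum.Sigma[OF finite_trees ballI[OF finite_Pow_iff[THEN iffD2, OF finite_walk_points]],
        symmetric]
    by (intro sum.cong refl) (auto simp: power_add tree_graph.card_walk_graph[OF tree_graphI])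
  also have "\<dots> = (\<Sum>T\<in>trees m. ?r ^ (m - 1) * tilt_weight p m T)"
  proof (rule sum.cong[OF refl])
    fix T assume "T \<in> trees m"
    then have "1 \<le> m" using trees_connected connected_graph.one_le by blast
    then show "(\<Sum>Q\<in>Pow (walk_points m T). ?r ^ (m - 1) * ?r ^ card Q) = ?r ^ (m - 1) * tilt_weight p m T"
      using assms
      by (simp add: sum_distrib_left[symmetric] sum_Pow_power finite_walk_points tilt_weight_eq)
  qed
  also have "\<dots> = ?r ^ (m - 1) * (\<Sum>T\<in>trees m. tilt_weight p m T)"
    by (simp add: sum_distrib_left)
  finally show ?thesis .
qed

definition weighted_connected_prob :: "real \<Rightarrow> nat \<Rightarrow> nat set set \<Rightarrow> real" where
  "weighted_connected_prob p m H = (if H \<in> connected_graphs m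
     then (p / (1 - p)) ^ card H / (\<Sum>H'\<in>connected_graphs m. (p / (1 - p)) ^ card H') else 0)"

lemma GX_connected: "T \<in> trees m \<Longrightarrow> GX m T Q \<in> connected_graphs m"
  using connected_graph.walk_graph_connected[OF trees_connected]
  by (simp add: GX_eq)

lemma GX_event_empty:
  assumes T: "T \<in> trees m" and T0: "T0 \<in> trees m" and Q0: "Q0 \<subseteq> walk_points m T0"
    and ne: "T \<noteq> T0"
  shows "{\<omega>. GX m T {x. \<omega> x} = T0 \<union> walk_edge T0 ` Q0} = {}"
proof -
  have "GX m T Q \<noteq> T0 \<union> walk_edge T0 ` Q0" for Q
  proof
    assume "GX m T Q = T0 \<union> walk_edge T0 ` Q0"
    then have "(T, Q \<inter> walk_points m T) = (T0, Q0)"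
      using T T0 Q0 unfolding GX_eq
      by (intro inj_onD[OF bij_betw_imp_inj_on[OF bij_betw_walk_graph]]) auto
    then show False using ne by simp
  qed
  then show ?thesis by blast
qed

lemma GX_tilted_tree_prob:
  assumes p: "0 < p" "p < 1"
  shows "(\<Sum>T\<in>trees m. tilt_prob p m T *
            measure (binom_pointset p) {\<omega>. GX m T {x. \<omega> x} = H})
         = weighted_connected_prob p m H"
proof (cases "H \<in> connected_graphs m")
  case False
  have "{\<omega>. GX m T {x. \<omega> x} = H} = {}" if "T \<in> trees m" for T
    using GX_connected[OF that] False by auto
  then show ?thesis by (simp add: weighted_connected_prob_def False)
next
  case True
  let ?r = "p / (1 - p)" and ?Z = "\<Sum>T\<in>trees m. tilt_weight p m T"
  let ?P = "\<lambda>T. measure (binom_pointset p) {\<omega>. GX m T {x. \<omega> x} = H}"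
  have "H \<in> (\<lambda>(T, Q). T \<union> walk_edge T ` Q) ` (SIGMA T:trees m. Pow (walk_points m T))"
    using True bij_betw_imp_surj_on[OF bij_betw_walk_graph] by simp
  then obtain T0 Q0 where T0: "T0 \<in> trees m" and Q0: "Q0 \<subseteq> walk_points m T0"
      and H: "H = T0 \<union> walk_edge T0 ` Q0"
    by (auto elim!: imageE)
  interpret t0: tree_graph T0 m using tree_graphI[OF T0] .
  have k: "card Q0 \<le> area m T0"
    using card_mono[OF finite_walk_points Q0] card_walk_points[OF t0.one_le] by simp
  have "(\<Sum>T\<in>trees m - {T0}. tilt_prob p m T * ?P T) = 0"
    using GX_event_empty[OF _ T0 Q0] unfolding H by (intro sum.neutral) auto
  then have "(\<Sum>T\<in>trees m. tilt_prob p m T * ?P T) = tilt_prob p m T0 * ?P T0"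
    by (simp add: sum.remove[OF finite_trees T0])
  also have "\<dots> = tilt_weight p m T0 * (p ^ card Q0 * (1 - p) ^ (area m T0 - card Q0)) / ?Z"
    using t0.measure_GX_event[OF Q0 less_imp_le[OF p(1)] less_imp_le[OF p(2)]]
    unfolding H by (simp add: tilt_prob_def)
  also have "\<dots> = ?r ^ card Q0 / ?Z"
    using tilt_weight_mult[OF p(2) k] by simp
  also have "\<dots> = ?r ^ card H / (?r ^ (m - 1) * ?Z)"
    using p H t0.card_walk_graph[OF Q0] by (simp add: power_add)
  finally show ?thesis
    using True p by (simp add: weighted_connected_prob_def sum_connected_graphs_weight)
qed

lemma comp_finite: "E \<subseteq> pairs n \<Longrightarrow> v \<in> {1..n} \<Longrightarrow> finite (comp E v)"
  using finite_subset[OF comp_subset] by blast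

lemma rank_less:
  assumes C: "finite C" and "x \<in> C" "y \<in> C" "x < y"
  shows "rank C x < rank C y"
proof -
  have "{z \<in> C. z \<le> x} \<subseteq> {z \<in> C. z \<le> y}" using assms(4) by auto
  moreover have "y \<in> {z \<in> C. z \<le> y} - {z \<in> C. z \<le> x}" using assms(3,4) by auto
  ultimately have "{z \<in> C. z \<le> x} \<subset> {z \<in> C. z \<le> y}" by blast
  then show ?thesis unfolding rank_def using C by (intro psubset_card_mono) auto
qed

lemma bij_betw_rank: assumes C: "finite C" shows "bij_betw (rank C) C {1..card C}"
proof -
  have inj: "inj_on (rank C) C"
    by (rule linorder_inj_onI) (use rank_less[OF C] in \<open>auto simp: less_imp_neq\<close>)
  have "rank C x \<in> {1..card C}" if "x \<in> C" for x
  proof -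
    have "0 < card {z \<in> C. z \<le> x}" using C that by (auto simp: card_gt_0_iff)
    moreover have "card {z \<in> C. z \<le> x} \<le> card C" using C by (intro card_mono) auto
    ultimately show ?thesis unfolding rank_def by simp
  qed
  then have "rank C ` C \<subseteq> {1..card C}" by blast
  moreover have "card (rank C ` C) = card {1..card C}" using card_image[OF inj] by simp
  ultimately show ?thesis using inj by (simp add: bij_betw_def card_subset_eq)
qed

definition unrank :: "nat set \<Rightarrow> nat \<Rightarrow> nat" where
  "unrank C = the_inv_into C (rank C)"

lemma unrank_rank: "finite C \<Longrightarrow> x \<in> C \<Longrightarrow> unrank C (rank C x) = x"
  unfolding unrank_def by (rule the_inv_into_f_f[OF bij_betw_imp_inj_on[OF bij_betw_rank]])

lemma rank_unrank: "finite C \<Longrightarrow> w \<in> {1..card C} \<Longrightarrow> rank C (unrank C w) = w"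
  unfolding unrank_def by (rule f_the_inv_into_f_bij_betw[OF bij_betw_rank])

lemma unrank_in: "finite C \<Longrightarrow> w \<in> {1..card C} \<Longrightarrow> unrank C w \<in> C"
  unfolding unrank_def using bij_betw_the_inv_into[OF bij_betw_rank] bij_betwE by blast

definition vertex_sets :: "nat \<Rightarrow> nat \<Rightarrow> nat \<Rightarrow> nat set set" where
  "vertex_sets n m v = {C. C \<subseteq> {1..n} \<and> v \<in> C \<and> card C = m}"

definition edges_avoiding :: "nat \<Rightarrow> nat set \<Rightarrow> nat set set set" where
  "edges_avoiding n C = {F. F \<subseteq> pairs n \<and> (\<forall>e\<in>F. e \<inter> C = {})}"

definition embed_graph :: "nat set \<Rightarrow> nat set set \<Rightarrow> nat set set" where
  "embed_graph C H = (\<lambda>e. unrank C ` e) ` H"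

lemma finite_vertex_sets: "finite (vertex_sets n m v)"
  by (rule finite_subset[of _ "Pow {1..n}"]) (auto simp: vertex_sets_def)

lemma finite_edges_avoiding: "finite (edges_avoiding n C)"
  by (rule finite_subset[of _ "Pow (pairs n)"]) (auto simp: edges_avoiding_def finite_pairs)

lemma vertex_sets_nonempty:
  assumes v: "v \<in> {1..n}" and m: "1 \<le> m" "m \<le> n"
  obtains C where "C \<in> vertex_sets n m v"
proof -
  have "m - 1 \<le> card ({1..n} - {v})" using v m by simp
  then obtain D where D: "D \<subseteq> {1..n} - {v}" "card D = m - 1"
    by (meson obtain_subset_with_card_n)
  moreover have "v \<notin> D" "finite D" using D(1) finite_subset[OF D(1)] by auto
  ultimately have "insert v D \<in> vertex_sets n m v"
    using v m by (auto simp: vertex_sets_def)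
  then show ?thesis by (rule that)
qed

lemma connected_graphs_reach:
  assumes "H \<in> connected_graphs m" "a \<in> {1..m}" "b \<in> {1..m}"
  shows "(a, b) \<in> (adj_rel H)\<^sup>*"
proof -
  have "(1, a) \<in> (adj_rel H)\<^sup>*" "(1, b) \<in> (adj_rel H)\<^sup>*"
    using assms unfolding connected_graphs_def connected_graph_def comp_def by auto
  then show ?thesis using reach_sym rtrancl_trans by metis
qed

lemma comp_relabel_subset:
  assumes E: "E \<subseteq> pairs n" and v: "v \<in> {1..n}"
  shows "comp_relabel E v \<subseteq> pairs (card (comp E v))"
proof
  let ?C = "comp E v" and ?rk = "rank (comp E v)"
  have bij: "bij_betw ?rk ?C {1..card ?C}" by (rule bij_betw_rank[OF comp_finite[OF E v]])
  fix f assume "f \<in> comp_relabel E v"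
  then obtain e where e: "e \<in> E" "e \<subseteq> ?C" "f = ?rk ` e" unfolding comp_relabel_def by blast
  then obtain x y where xy: "e = {x, y}" "x \<noteq> y" using E by (blast elim: pairsE)
  then have "x \<in> ?C" "y \<in> ?C" using e(2) by auto
  then have "?rk x \<in> {1..card ?C}" "?rk y \<in> {1..card ?C}" "?rk x \<noteq> ?rk y"
    using bij xy(2) unfolding bij_betw_def inj_on_def by auto
  then show "f \<in> pairs (card ?C)" using e(3) xy(1) pairs_memI by simp
qed

lemma comp_relabel_reach:
  assumes E: "E \<subseteq> pairs n" and v: "v \<in> {1..n}" and u: "u \<in> comp E v"
  shows "(rank (comp E v) v, rank (comp E v) u) \<in> (adj_rel (comp_relabel E v))\<^sup>*"
proof -
  let ?C = "comp E v" and ?rk = "rank (comp E v)"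
  have inj: "inj_on ?rk ?C" using bij_betw_rank[OF comp_finite[OF E v]] by (rule bij_betw_imp_inj_on)
  have "(v, u) \<in> (adj_rel E)\<^sup>*" using u by (simp add: comp_def)
  then show ?thesis
  proof induction
    case (step x y)
    then have xy: "x \<in> ?C" "{x, y} \<in> E" "x \<noteq> y" by (simp_all add: comp_def)
    then have "y \<in> ?C" by (rule comp_closed)
    then have "{?rk x, ?rk y} \<in> comp_relabel E v" "?rk x \<noteq> ?rk y"
      using xy inj unfolding comp_relabel_def inj_on_def by (auto intro!: image_eqI[of _ _ "{x, y}"])
    then have "(?rk x, ?rk y) \<in> adj_rel (comp_relabel E v)" by simp
    with step.IH show ?case by (rule rtrancl_into_rtrancl)
  qed simp
qed

lemma relabel_connected:
  assumes E: "E \<subseteq> pairs n" and v: "v \<in> {1..n}" and m: "card (comp E v) = m"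
  shows "comp_relabel E v \<in> connected_graphs m"
proof -
  let ?C = "comp E v" and ?rk = "rank (comp E v)" and ?G = "comp_relabel E v"
  have img: "?rk ` ?C = {1..m}"
    using bij_betw_rank[OF comp_finite[OF E v]] m by (simp add: bij_betw_def)
  have G: "?G \<subseteq> pairs m" using comp_relabel_subset[OF E v] m by simp
  have "?rk v \<in> {1..m}" using img comp_self[of v E] by blast
  then have "1 \<in> ?rk ` ?C" using img by auto
  then obtain u1 where u1: "u1 \<in> ?C" "1 = ?rk u1" by (rule imageE)
  have "{1..m} \<subseteq> comp ?G 1"
  proof
    fix w assume "w \<in> {1..m}"
    then obtain u where u: "u \<in> ?C" "w = ?rk u" using img by (metis imageE)
    have "(1, ?rk v) \<in> (adj_rel ?G)\<^sup>*"
      using reach_sym[OF comp_relabel_reach[OF E v u1(1)]] u1(2) by simp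
    then have "(1, w) \<in> (adj_rel ?G)\<^sup>*" using comp_relabel_reach[OF E v u(1)] u(2) by simp
    then show "w \<in> comp ?G 1" by (simp add: comp_def)
  qed
  then have "comp ?G 1 = {1..m}" using comp_subset[OF G, of 1] \<open>?rk v \<in> {1..m}\<close> by auto
  then show ?thesis using G unfolding connected_graphs_def connected_graph_def by simp
qed

locale component_split =
  fixes n m v :: nat and C :: "nat set" and H F :: "nat set set"
  assumes C: "C \<in> vertex_sets n m v" and H: "H \<in> connected_graphs m"
    and F: "F \<in> edges_avoiding n C"
begin

lemma C_sub: "C \<subseteq> {1..n}" and vC: "v \<in> C" and card_C: "card C = m" and fin_C: "finite C"
  using C finite_subset[of C "{1..n}"] unfolding vertex_sets_def by auto

lemma H_pairs: "H \<subseteq> pairs m"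
  using H unfolding connected_graphs_def connected_graph_def by simp

lemma F_pairs: "F \<subseteq> pairs n" and F_avoids: "e \<in> F \<Longrightarrow> e \<inter> C = {}"
  using F unfolding edges_avoiding_def by auto

lemma unrank_in_C: "w \<in> {1..m} \<Longrightarrow> unrank C w \<in> C"
  using unrank_in[OF fin_C] card_C by simp

lemma rank_unrank_C: "w \<in> {1..m} \<Longrightarrow> rank C (unrank C w) = w"
  using rank_unrank[OF fin_C] card_C by simp

lemma rank_unrank_edge: "e \<in> H \<Longrightarrow> rank C ` unrank C ` e = e"
  using rank_unrank_C pairs_subset H_pairs by (force simp: image_image)

lemma embed_edge:
  assumes "{a, b} \<in> H" shows "{unrank C a, unrank C b} \<in> embed_graph C H"
    and "unrank C a \<noteq> unrank C b"
proof -
  show "{unrank C a, unrank C b} \<in> embed_graph C H"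
    using assms unfolding embed_graph_def by (intro image_eqI[of _ _ "{a, b}"]) auto
  have "a \<in> {1..m}" "b \<in> {1..m}" "a \<noteq> b" using assms H_pairs pairs_memD by blast+
  then show "unrank C a \<noteq> unrank C b" using rank_unrank_C by metis
qed

lemma embed_subset: "e \<in> embed_graph C H \<Longrightarrow> e \<subseteq> C"
  using unrank_in_C pairs_subset H_pairs unfolding embed_graph_def by blast

lemma embed_pairs: "embed_graph C H \<subseteq> pairs n"
proof
  fix e assume "e \<in> embed_graph C H"
  then obtain a b where "{a, b} \<in> H" "e = {unrank C a, unrank C b}"
    unfolding embed_graph_def using H_pairs by (auto elim!: pairsE)
  then show "e \<in> pairs n"
    using embed_edge embed_subset C_sub by (metis insert_subset pairs_memI subsetD)
qed

lemma F_not_subset: "e \<in> F \<Longrightarrow> \<not> e \<subseteq> C"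
proof -
  assume "e \<in> F"
  then have "e \<noteq> {}" "e \<inter> C = {}" using F_pairs pairs_nonempty F_avoids by auto
  then show ?thesis by blast
qed

lemma embed_disjoint: "embed_graph C H \<inter> F = {}"
  using embed_subset F_not_subset by blast

abbreviation G :: "nat set set" where
  "G \<equiv> embed_graph C H \<union> F"

lemma comp_G: "comp G v = C"
proof
  show "comp G v \<subseteq> C"
  proof
    fix x assume "x \<in> comp G v"
    then have "(v, x) \<in> (adj_rel G)\<^sup>*" by (simp add: comp_def)
    then show "x \<in> C"
    proof induction
      case (step x y)
      then have "{x, y} \<in> embed_graph C H" using F_avoids by auto
      then show ?case using embed_subset by blast
    qed (rule vC)
  qed
  have lift: "(unrank C a, unrank C b) \<in> (adj_rel G)\<^sup>*" if "(a, b) \<in> (adj_rel H)\<^sup>*" for a b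
    using that
  proof induction
    case (step x y)
    then have "(unrank C x, unrank C y) \<in> adj_rel G" using embed_edge by simp
    with step.IH show ?case by (rule rtrancl_into_rtrancl)
  qed simp
  show "C \<subseteq> comp G v"
  proof
    fix c assume c: "c \<in> C"
    have rk: "rank C x \<in> {1..m}" if "x \<in> C" for x
      using bij_betwE[OF bij_betw_rank[OF fin_C]] that card_C by simp
    have "(unrank C (rank C v), unrank C (rank C c)) \<in> (adj_rel G)\<^sup>*"
      using lift connected_graphs_reach[OF H rk[OF vC] rk[OF c]] by blast
    then show "c \<in> comp G v" using unrank_rank[OF fin_C] vC c by (simp add: comp_def)
  qed
qed

lemma relabel_G: "comp_relabel G v = H"
proof -
  have inside: "{e \<in> G. e \<subseteq> C} = embed_graph C H"
    using embed_subset F_not_subset by blast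
  have "comp_relabel G v = (\<lambda>e. rank C ` e) ` {e \<in> G. e \<subseteq> C}"
    by (simp only: comp_relabel_def comp_G)
  also have "\<dots> = (\<lambda>e. rank C ` unrank C ` e) ` H"
    unfolding inside unfolding embed_graph_def image_image ..
  also have "\<dots> = H" using rank_unrank_edge by simp
  finally show ?thesis .
qed

lemma card_G: "card G = card H + card F"
proof -
  have "inj_on (\<lambda>e. unrank C ` e) H"
    using rank_unrank_edge by (metis inj_onI)
  then have "card (embed_graph C H) = card H" unfolding embed_graph_def by (rule card_image)
  moreover have "finite (embed_graph C H)" "finite F"
    using embed_pairs F_pairs finite_subset finite_pairs by blast+
  ultimately show ?thesis using embed_disjoint by (simp add: card_Un_disjoint)
qed

lemma outside_G: "{e \<in> G. \<not> e \<subseteq> C} = F"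
  using embed_subset F_not_subset by blast

lemma card_G_le: "card H + card F \<le> card (pairs n)"
  using card_mono[OF finite_pairs, of G] embed_pairs F_pairs card_G by simp

end

lemma component_split_iff:
  "component_split n m v C H F \<longleftrightarrow>
     C \<in> vertex_sets n m v \<and> H \<in> connected_graphs m \<and> F \<in> edges_avoiding n C"
  unfolding component_split_def ..

definition component_fiber :: "nat \<Rightarrow> nat \<Rightarrow> nat \<Rightarrow> nat set set \<Rightarrow> nat set set set" where
  "component_fiber n m v H = {E. E \<subseteq> pairs n \<and> card (comp E v) = m \<and> comp_relabel E v = H}"

lemma component_decomposition:
  assumes E: "E \<subseteq> pairs n" and v: "v \<in> {1..n}" and m: "card (comp E v) = m"
  shows "comp E v \<in> vertex_sets n m v"
    and "{e \<in> E. \<not> e \<subseteq> comp E v} \<in> edges_avoiding n (comp E v)"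
    and "E = embed_graph (comp E v) (comp_relabel E v) \<union> {e \<in> E. \<not> e \<subseteq> comp E v}"
proof -
  let ?C = "comp E v"
  show "?C \<in> vertex_sets n m v"
    using comp_subset[OF E v] comp_self m unfolding vertex_sets_def by simp
  have "e \<inter> ?C = {}" if "e \<in> E" "\<not> e \<subseteq> ?C" for e
    using edge_subset_comp[OF E that(1)] that(2) by blast
  then show "{e \<in> E. \<not> e \<subseteq> ?C} \<in> edges_avoiding n ?C"
    using E unfolding edges_avoiding_def by auto
  have "embed_graph ?C (comp_relabel E v) = (\<lambda>e. unrank ?C ` rank ?C ` e) ` {e \<in> E. e \<subseteq> ?C}"
    unfolding embed_graph_def comp_relabel_def image_image ..
  also have "\<dots> = {e \<in> E. e \<subseteq> ?C}"
    using unrank_rank[OF comp_finite[OF E v]] by (force simp: image_image subset_iff)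
  finally show "E = embed_graph ?C (comp_relabel E v) \<union> {e \<in> E. \<not> e \<subseteq> ?C}" by blast
qed

lemma bij_betw_component_split:
  assumes H: "H \<in> connected_graphs m" and v: "v \<in> {1..n}"
  shows "bij_betw (\<lambda>(C, F). embed_graph C H \<union> F)
           (SIGMA C:vertex_sets n m v. edges_avoiding n C) (component_fiber n m v H)"
proof (rule bij_betw_imageI)
  show "inj_on (\<lambda>(C, F). embed_graph C H \<union> F) (SIGMA C:vertex_sets n m v. edges_avoiding n C)"
  proof (rule inj_onI, clarify)
    fix C F C' F'
    assume "C \<in> vertex_sets n m v" "F \<in> edges_avoiding n C"
      "C' \<in> vertex_sets n m v" "F' \<in> edges_avoiding n C'"
      and eq: "embed_graph C H \<union> F = embed_graph C' H \<union> F'"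
    then interpret s: component_split n m v C H F using H by (simp add: component_split_iff)
    interpret s': component_split n m v C' H F'
      using H \<open>C' \<in> _\<close> \<open>F' \<in> _\<close> by (simp add: component_split_iff)
    have C: "C = C'" using s.comp_G s'.comp_G eq by simp
    have "F = {e \<in> embed_graph C H \<union> F. \<not> e \<subseteq> C}" using s.outside_G by simp
    also have "\<dots> = {e \<in> embed_graph C' H \<union> F'. \<not> e \<subseteq> C'}" using eq C by simp
    also have "\<dots> = F'" using s'.outside_G .
    finally show "C = C' \<and> F = F'" using C by simp
  qed
  show "(\<lambda>(C, F). embed_graph C H \<union> F) ` (SIGMA C:vertex_sets n m v. edges_avoiding n C)
      = component_fiber n m v H"
  proof (intro equalityI subsetI)
    fix E assume "E \<in> (\<lambda>(C, F). embed_graph C H \<union> F) ` (SIGMA C:vertex_sets n m v. edges_avoiding n C)"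
    then obtain C F where "C \<in> vertex_sets n m v" "F \<in> edges_avoiding n C"
      and E: "E = embed_graph C H \<union> F" by auto
    then interpret component_split n m v C H F using H by (simp add: component_split_iff)
    show "E \<in> component_fiber n m v H"
      using E embed_pairs F_pairs comp_G relabel_G card_C unfolding component_fiber_def by simp
  next
    fix E assume "E \<in> component_fiber n m v H"
    then have E: "E \<subseteq> pairs n" "card (comp E v) = m" "comp_relabel E v = H"
      unfolding component_fiber_def by auto
    note d = component_decomposition[OF E(1) v E(2)]
    show "E \<in> (\<lambda>(C, F). embed_graph C H \<union> F) ` (SIGMA C:vertex_sets n m v. edges_avoiding n C)"
      using d E(3) by (intro rev_image_eqI[of "(comp E v, {e \<in> E. \<not> e \<subseteq> comp E v})"]) auto
  qed
qed

lemma component_fiber_empty: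
  "v \<in> {1..n} \<Longrightarrow> H \<notin> connected_graphs m \<Longrightarrow> component_fiber n m v H = {}"
  using relabel_connected unfolding component_fiber_def by blast

lemma pairs_connected: assumes "1 \<le> m" shows "pairs m \<in> connected_graphs m"
proof -
  have "w \<in> comp (pairs m) 1" if w: "w \<in> {1..m}" for w
  proof (cases "w = 1")
    case False
    then have "{1, w} \<in> pairs m" using w assms by (intro pairs_memI) auto
    then show ?thesis using comp_closed[OF comp_self] False by metis
  qed (simp add: comp_self)
  then have "comp (pairs m) 1 = {1..m}" using comp_subset[of "pairs m" m 1] assms by auto
  then show ?thesis unfolding connected_graphs_def connected_graph_def by simp
qed

definition gnp_weight :: "nat \<Rightarrow> real \<Rightarrow> nat set set \<Rightarrow> real" where
  "gnp_weight n p E = p ^ card E * (1 - p) ^ (card (pairs n) - card E)"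

lemma set_pmf_gnp: "set_pmf (gnp n p) \<subseteq> Pow (pairs n)"
  unfolding gnp_def by auto

lemma pmf_gnp:
  assumes p: "0 < p" "p < 1" and E: "E \<subseteq> pairs n"
  shows "pmf (gnp n p) E = gnp_weight n p E"
proof -
  let ?M = "Pi_pmf (pairs n) False (\<lambda>_. bernoulli_pmf p)" and ?f = "\<lambda>\<omega>. {e \<in> pairs n. \<omega> e}"
  have inj: "inj_on ?f (set_pmf ?M)"
  proof (rule inj_onI, rule ext)
    fix a b x assume a: "a \<in> set_pmf ?M" and b: "b \<in> set_pmf ?M" and eq: "?f a = ?f b"
    show "a x = b x"
    proof (cases "x \<in> pairs n")
      case True
      have "x \<in> ?f a \<longleftrightarrow> x \<in> ?f b" using eq by (rule arg_cong)
      with True show ?thesis by (simp only: mem_Collect_eq simp_thms)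
    next
      case False
      then show ?thesis
        using a b by (auto dest!: subsetD[OF set_Pi_pmf_subset[OF finite_pairs[of n]]])
    qed
  qed
  have "\<forall>x. x \<in> pairs n \<or> x \<notin> E" using E by blast
  then have w: "pmf ?M (\<lambda>e. e \<in> E) = gnp_weight n p E"
    using E p unfolding gnp_weight_def
    by (simp add: pmf_Pi[OF finite_pairs] prod_bernoulli_indicator[OF finite_pairs E])
  then have "(\<lambda>e. e \<in> E) \<in> set_pmf ?M"
    using p by (simp add: set_pmf_iff gnp_weight_def)
  then have "pmf (map_pmf ?f ?M) (?f (\<lambda>e. e \<in> E)) = pmf ?M (\<lambda>e. e \<in> E)"
    by (rule pmf_map_inj[OF inj])
  moreover have "?f (\<lambda>e. e \<in> E) = E" using E by blast
  ultimately show ?thesis using w by (simp add: gnp_def)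
qed

lemma measure_gnp:
  assumes "0 < p" "p < 1"
  shows "measure (measure_pmf (gnp n p)) A = (\<Sum>E\<in>{E \<in> A. E \<subseteq> pairs n}. gnp_weight n p E)"
proof -
  have "measure (measure_pmf (gnp n p)) A = (\<Sum>E\<in>A \<inter> Pow (pairs n). pmf (gnp n p) E)"
    by (rule measure_pmf_eq_sum) (simp_all add: finite_pairs set_pmf_gnp)
  also have "A \<inter> Pow (pairs n) = {E \<in> A. E \<subseteq> pairs n}" by blast
  finally show ?thesis using pmf_gnp[OF assms] by simp
qed

lemma (in component_split) gnp_weight_G:
  assumes "p < 1" shows "gnp_weight n p G = (p / (1 - p)) ^ card H * gnp_weight n p F"
proof -
  have "(1 - p) ^ (card (pairs n) - card F)
      = (1 - p) ^ (card (pairs n) - (card H + card F)) * (1 - p) ^ card H"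
    using card_G_le by (simp add: power_add[symmetric])
  then show ?thesis
    using assms unfolding gnp_weight_def card_G by (simp add: power_add power_divide field_simps)
qed

definition outside_weight :: "nat \<Rightarrow> real \<Rightarrow> nat \<Rightarrow> nat \<Rightarrow> real" where
  "outside_weight n p m v = (\<Sum>(C, F)\<in>(SIGMA C:vertex_sets n m v. edges_avoiding n C). gnp_weight n p F)"

lemma sum_component_fiber:
  assumes H: "H \<in> connected_graphs m" and v: "v \<in> {1..n}" and p: "p < 1"
  shows "(\<Sum>E\<in>component_fiber n m v H. gnp_weight n p E)
       = (p / (1 - p)) ^ card H * outside_weight n p m v"
proof -
  have "(\<Sum>E\<in>component_fiber n m v H. gnp_weight n p E)
      = (\<Sum>(C, F)\<in>(SIGMA C:vertex_sets n m v. edges_avoiding n C). gnp_weight n p (embed_graph C H \<union> F))"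
    using sum.reindex_bij_betw[OF bij_betw_component_split[OF H v],
        of "gnp_weight n p"] by (simp add: case_prod_beta)
  also have "\<dots> = (\<Sum>(C, F)\<in>(SIGMA C:vertex_sets n m v. edges_avoiding n C).
                     (p / (1 - p)) ^ card H * gnp_weight n p F)"
    using H component_split.gnp_weight_G[OF _ p]
    by (intro sum.cong refl) (auto simp: component_split_iff)
  finally show ?thesis by (simp add: outside_weight_def sum_distrib_left case_prod_beta)
qed

lemma outside_weight_pos:
  assumes p: "0 < p" "p < 1" and v: "v \<in> {1..n}" and m: "1 \<le> m" "m \<le> n"
  shows "0 < outside_weight n p m v"
proof -
  obtain C where "C \<in> vertex_sets n m v" using vertex_sets_nonempty[OF v m] .
  moreover have "{} \<in> edges_avoiding n C" unfolding edges_avoiding_def by simp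
  ultimately have "(C, {}) \<in> (SIGMA C:vertex_sets n m v. edges_avoiding n C)" by simp
  moreover have "finite (SIGMA C:vertex_sets n m v. edges_avoiding n C)"
    by (simp add: finite_vertex_sets finite_edges_avoiding)
  ultimately show ?thesis unfolding outside_weight_def gnp_weight_def
    using p by (intro sum_pos2) auto
qed

lemma measure_gnp_component_size:
  assumes p: "0 < p" "p < 1" and v: "v \<in> {1..n}"
  shows "measure (measure_pmf (gnp n p)) {E. card (comp E v) = m}
       = (\<Sum>H\<in>connected_graphs m. (p / (1 - p)) ^ card H) * outside_weight n p m v"
proof -
  let ?S = "{E \<in> {E. card (comp E v) = m}. E \<subseteq> pairs n}"
  have "finite ?S" by (rule finite_subset[of _ "Pow (pairs n)"]) (auto simp: finite_pairs)
  moreover have "(\<lambda>E. comp_relabel E v) ` ?S \<subseteq> connected_graphs m"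
    using relabel_connected[OF _ v] by blast
  ultimately have "(\<Sum>E\<in>?S. gnp_weight n p E)
      = (\<Sum>H\<in>connected_graphs m. \<Sum>E\<in>{E \<in> ?S. comp_relabel E v = H}. gnp_weight n p E)"
    by (rule sum.group[OF _ finite_connected_graphs, symmetric])
  also have "\<dots> = (\<Sum>H\<in>connected_graphs m. (p / (1 - p)) ^ card H * outside_weight n p m v)"
    using sum_component_fiber[OF _ v p(2)]
    by (intro sum.cong refl) (simp add: component_fiber_def conj_ac)
  finally show ?thesis
    using measure_gnp[OF p] by (simp add: sum_distrib_right)
qed

lemma pmf_Gpm:
  assumes p: "0 < p" "p < 1" and m: "1 \<le> m" "m \<le> n" and v: "v \<in> {1..n}"
  shows "pmf (Gpm n p m v) H = weighted_connected_prob p m H"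
proof -
  let ?G = "gnp n p" and ?B = "{E. card (comp E v) = m}" and ?K = "outside_weight n p m v"
  let ?S = "\<Sum>H\<in>connected_graphs m. (p / (1 - p)) ^ card H"
  have S: "0 < ?S"
    using pairs_connected[OF m(1)] p
    by (intro sum_pos2[OF finite_connected_graphs, of "pairs m"]) auto
  have K: "0 < ?K" by (rule outside_weight_pos[OF p v m])
  have den: "measure (measure_pmf ?G) ?B = ?S * ?K" by (rule measure_gnp_component_size[OF p v])
  then have "set_pmf ?G \<inter> ?B \<noteq> {}" using S K by (simp add: measure_pmf_zero_iff[symmetric])
  moreover have "finite (set_pmf ?G)"
    by (rule finite_subset[OF set_pmf_gnp]) (simp add: finite_pairs)
  ultimately have "pmf (Gpm n p m v) H
      = measure (measure_pmf ?G) ((\<lambda>E. comp_relabel E v) -` {H} \<inter> ?B) / (?S * ?K)"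
    unfolding Gpm_def pmf_map by (simp add: measure_cond_pmf den)
  also have "\<dots> = (\<Sum>E\<in>component_fiber n m v H. gnp_weight n p E) / (?S * ?K)"
    using measure_gnp[OF p] by (simp add: component_fiber_def conj_ac)
  finally show ?thesis
    using S K sum_component_fiber[OF _ v p(2), of H] component_fiber_empty[OF v, of H m]
    by (simp add: weighted_connected_prob_def)
qed

theorem lemma10:
  fixes p :: real and m n v :: nat and H :: "nat set set"
  assumes "0 < p" "p < 1" "1 \<le> m" "m \<le> n" "v \<in> {1..n}"
  shows "(\<Sum>T\<in>trees m. tilt_prob p m T *
            measure (binom_pointset p) {\<omega>. GX m T {x. \<omega> x} = H})
         = pmf (Gpm n p m v) H"
  using GX_tilted_tree_prob[OF assms(1,2)] pmf_Gpm[OF assms] by simp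

end
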